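(* Let $r\ge 0$ and let $\mathcal Y_r(\mathbf q,\dot{\mathbf q},\dots,\mathbf q^{(r)},\mathbf q^{(r+1)},t)$ be a smooth real-valued function. Let $\bar{\mathbf q}(\mathbf q,t)$ be a $C^\infty$ change of coordinates on $\mathbb R^\ell$ with $\det J_{\mathbf q}\bar{\mathbf q}\neq 0$, where $(J_{\mathbf q}\bar{\mathbf q})_{ij}=\partial\bar q_i/\partial q_j$. Let $\widetilde{\mathcal Y}_r(\bar{\mathbf q},\dot{\bar{\mathbf q}},\dots,\bar{\mathbf q}^{(r+1)},t)$ denote $\mathcal Y_r$ expressed in the new variables, i.e. $\mathcal Y_r$ evaluated at $\mathbf q(\bar{\mathbf q},t)$, $\dot{\mathbf q}(\bar{\mathbf q},\dot{\bar{\mathbf q}},t)$, …, $\mathbf q^{(r+1)}(\bar{\mathbf q},\dots,\bar{\mathbf q}^{(r+1)},t)$ (the inverse transformation and its total time derivatives). Then the operator $\mathcal O_r$ is covariant: $$\nabla_{\mathbf q^{(r)}}\mathcal Y_r-(r+1)\frac{d}{dt}\nabla_{\mathbf q^{(r+1)}}\mathcal Y_r=(J_{\mathbf q}\bar{\mathbf q})^T\Big(\nabla_{\bar{\mathbf q}^{(r)}}\widetilde{\mathcal Y}_r-(r+1)\frac{d}{dt}\nabla_{\bar{\mathbf q}^{(r+1)}}\widetilde{\mathcal Y}_r\Big),$$ where both sides are evaluated at corresponding points (equivalently, along any smooth curve $t\mapsto\mathbf q(t)$ and its image $\bar{\mathbf q}(t)=\bar{\mathbf q}(\mathbf q(t)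,t)$).
   Context: $\mathbf q=(q_1,\dots,q_\ell)\in\mathbb R^\ell$; $\mathbf q^{(h)}$ denotes the $h$-th time derivative $d^h\mathbf q/dt^h$ (with $\mathbf q^{(0)}=\mathbf q$), treated as independent variables of the functions considered. For a function $F(\mathbf q,\dots,\mathbf q^{(k)},t)$, $\frac{dF}{dt}=\partial_t F+\sum_{j=0}^{k}\nabla_{\mathbf q^{(j)}}F\cdot\mathbf q^{(j+1)}$ is the total time derivative, and $\nabla_{\mathbf q^{(j)}}F$ is the gradient with respect to the variables $\mathbf q^{(j)}$. For $r\ge0$ and a function $\mathcal Y_r$ depending on $\mathbf q,\dots,\mathbf q^{(r+1)},t$, the extended Lagrangian binomial is $\mathcal O_r[\mathcal Y_r]=\nabla_{\mathbf q^{(r)}}\mathcal Y_r-(r+1)\frac{d}{dt}\nabla_{\mathbf q^{(r+1)}}\mathcal Y_r$ (an $\mathbb R^\ell$-valued function); for $r=0$ it is the usual $\nabla_{\mathbf q}\mathcal L-\frac d{dt}\nabla_{\dot{\mathbf q}}\mathcal L$. *)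

theory Defs
  imports "HOL-Analysis.Analysis"
begin

coinductive smoothE :: "('a::euclidean_space \<Rightarrow> real) \<Rightarrow> bool" where
  "continuous_on UNIV f \<Longrightarrow>
   (\<forall>b\<in>Basis. \<exists>g. (\<forall>x. ((\<lambda>s. f (x + s *\<^sub>R b)) has_real_derivative g x) (at 0)) \<and> smoothE g) \<Longrightarrow>
   smoothE f"

text \<open>Jet variables: a point of jet space is a sequence J :: nat => real^n, where J k stands for
  the k-th derivative q^(k); together with the time t.  Smoothness: continuity (product topology; for functions
  depending on finitely many slots this is ordinary continuity) and smoothness of all partial
  derivatives with respect to each component of each slot and with respect to t.\<close>
coinductive smoothJ :: "((nat \<Rightarrow> real^'n) \<Rightarrow> real \<Rightarrow> real) \<Rightarrow> bool" where
  "continuous_on UNIV (\<lambda>p. F (fst p) (snd p)) \<Longrightarrow>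
   (\<forall>j i. \<exists>G. (\<forall>J t. ((\<lambda>s. F (J(j := J j + s *\<^sub>R axis i 1)) t) has_real_derivative G J t) (at 0))
               \<and> smoothJ G) \<Longrightarrow>
   (\<exists>G. (\<forall>J t. ((\<lambda>s. F J (t + s)) has_real_derivative G J t) (at 0)) \<and> smoothJ G) \<Longrightarrow>
   smoothJ F"

definition depends_upto :: "nat \<Rightarrow> ((nat \<Rightarrow> real^'n) \<Rightarrow> real \<Rightarrow> 'b) \<Rightarrow> bool" where
  "depends_upto k F \<longleftrightarrow> (\<forall>J J' t. (\<forall>j\<le>k. J j = J' j) \<longrightarrow> F J t = F J' t)"

definition gradJ :: "nat \<Rightarrow> ((nat \<Rightarrow> real^'n) \<Rightarrow> real \<Rightarrow> real) \<Rightarrow> (nat \<Rightarrow> real^'n) \<Rightarrow> real \<Rightarrow> real^'n" where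
  "gradJ j F J t = (\<chi> i. deriv (\<lambda>s. F (J(j := J j + s *\<^sub>R axis i 1)) t) 0)"

definition dtJ :: "((nat \<Rightarrow> real^'n) \<Rightarrow> real \<Rightarrow> real) \<Rightarrow> (nat \<Rightarrow> real^'n) \<Rightarrow> real \<Rightarrow> real" where
  "dtJ F J t = deriv (\<lambda>s. F J (t + s)) 0"

definition totJ :: "nat \<Rightarrow> ((nat \<Rightarrow> real^'n) \<Rightarrow> real \<Rightarrow> real) \<Rightarrow> (nat \<Rightarrow> real^'n) \<Rightarrow> real \<Rightarrow> real" where
  "totJ k F J t = dtJ F J t + (\<Sum>j\<le>k. gradJ j F J t \<bullet> J (Suc j))"

definition totJv :: "nat \<Rightarrow> ((nat \<Rightarrow> real^'n) \<Rightarrow> real \<Rightarrow> real^'m) \<Rightarrow> (nat \<Rightarrow> real^'n) \<Rightarrow> real \<Rightarrow> real^'m" where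
  "totJv k G J t = (\<chi> i. totJ k (\<lambda>J' t'. G J' t' $ i) J t)"

text \<open>Extended Lagrangian binomial O_r[Y] = grad_{q^(r)} Y - (r+1) d/dt grad_{q^(r+1)} Y,
  for Y depending on q, ..., q^(r+1), t (so grad_{q^(r+1)} Y depends on slots up to r+1).\<close>
definition Op :: "nat \<Rightarrow> ((nat \<Rightarrow> real^'n) \<Rightarrow> real \<Rightarrow> real) \<Rightarrow> (nat \<Rightarrow> real^'n) \<Rightarrow> real \<Rightarrow> real^'n" where
  "Op r Y J t = gradJ r Y J t - real (Suc r) *\<^sub>R totJv (Suc r) (gradJ (Suc r) Y) J t"

definition jac :: "(real^'n \<Rightarrow> real \<Rightarrow> real^'n) \<Rightarrow> real^'n \<Rightarrow> real \<Rightarrow> real^'n^'n" where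
  "jac \<Phi> q t = (\<chi> i j. deriv (\<lambda>s. \<Phi> (q + s *\<^sub>R axis j 1) t $ i) 0)"

text \<open>Induced map on jets: the k-th time derivative of \<Phi>(q,t) expressed as a function
  of q, ..., q^(k), t (iterated total derivatives).\<close>
fun jetmap :: "(real^'n \<Rightarrow> real \<Rightarrow> real^'n) \<Rightarrow> nat \<Rightarrow> (nat \<Rightarrow> real^'n) \<Rightarrow> real \<Rightarrow> real^'n" where
  "jetmap \<Phi> 0 = (\<lambda>J t. \<Phi> (J 0) t)"
| "jetmap \<Phi> (Suc k) = totJv k (jetmap \<Phi> k)"

text \<open>A jet function transported through a coordinate transformation whose inverse is \<Psi>:
  Ytilde(qbar-jet, t) = Y(q-jet(qbar-jet, t), t).\<close>
definition transport :: "(real^'n \<Rightarrow> real \<Rightarrow> real^'n) \<Rightarrow> ((nat \<Rightarrow> real^'n) \<Rightarrow> real \<Rightarrow> real)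
    \<Rightarrow> (nat \<Rightarrow> real^'n) \<Rightarrow> real \<Rightarrow> real" where
  "transport \<Psi> Y = (\<lambda>Jb t. Y (\<lambda>k. jetmap \<Psi> k Jb t) t)"

end

theory Submission
  imports Defs
begin

text \<open>
  Write \<open>Q = \<Phi> q t\<close> and \<open>q = \<Psi> Q t\<close>, and let \<open>A\<close> be the Jacobian of \<open>\<Psi>\<close>. Two identities for
  the prolongation of \<open>\<Psi>\<close> to jets drive the proof: the ``cancellation of dots''
  \<open>\<partial>q^(k) / \<partial>Q^(k) = A\<close> and \<open>\<partial>q^(k+1) / \<partial>Q^(k) = (k + 1) dA/dt\<close>. Both follow by induction on \<open>k\<close>
  from the commutation rule \<open>\<partial>/\<partial>q^(p) (dF/dt) = d/dt (\<partial>F/\<partial>q^(p)) + \<partial>F/\<partial>q^(p-1)\<close>, which rests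
  on the symmetry of second partial derivatives.

  The transported function \<open>Yb\<close> depends on \<open>Q^(r+1)\<close> only through \<open>q^(r+1)\<close>, so the chain rule
  gives \<open>\<nabla>_Q^(r+1) Yb = A\<^sup>T \<nabla>_q^(r+1) Y\<close> and
  \<open>\<nabla>_Q^(r) Yb = A\<^sup>T \<nabla>_q^(r) Y + (r + 1) (dA/dt)\<^sup>T \<nabla>_q^(r+1) Y\<close>. Differentiating the first identity in
  time (total time derivatives commute with substituting the prolongation), the two terms
  containing \<open>dA/dt\<close> cancel in \<open>Op r\<close>, so \<open>Op r Yb = A\<^sup>T (Op r Y)\<close> for every smooth point map \<open>\<Psi>\<close>,
  invertible or not. Finally \<open>A J\<^sub>\<Phi> = 1\<close> because \<open>\<Psi> \<circ> \<Phi> = id\<close>.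
\<close>

section \<open>Coordinates of jet space\<close>

type_synonym 'n jet_point = "(nat \<Rightarrow> real^'n) \<times> real"

type_synonym 'n jet_fun = "(nat \<Rightarrow> real^'n) \<Rightarrow> real \<Rightarrow> real"

text \<open>\<open>None\<close> is the time coordinate, \<open>Some (j, i)\<close> the \<open>i\<close>-th component of \<open>q^(j)\<close>.\<close>

fun jet_coord :: "(nat \<times> 'n::finite) option \<Rightarrow> 'n jet_point \<Rightarrow> real" where
  "jet_coord None p = snd p"
| "jet_coord (Some (j, i)) p = fst p j $ i"

fun jet_coord_upd :: "(nat \<times> 'n::finite) option \<Rightarrow> real \<Rightarrow> 'n jet_point \<Rightarrow> 'n jet_point" where
  "jet_coord_upd None v p = (fst p, v)"
| "jet_coord_upd (Some (j, i)) v p = ((fst p)(j := fst p j + (v - fst p j $ i) *\<^sub>R axis i 1), snd p)"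

lemma jet_coord_upd_same [simp]: "jet_coord d (jet_coord_upd d v p) = v"
  by (cases d) (auto simp: axis_def)

lemma jet_coord_upd_other: "d' \<noteq> d \<Longrightarrow> jet_coord d' (jet_coord_upd d v p) = jet_coord d' p"
  by (cases d; cases d') (auto simp: axis_def split: if_split_asm)

lemma jet_point_eqI: "(\<And>d. jet_coord d p = jet_coord d q) \<Longrightarrow> p = q"
proof -
  assume h: "\<And>d. jet_coord d p = jet_coord d q"
  have "snd p = snd q" using h[of None] by simp
  moreover have "fst p = fst q"
  proof
    fix j show "fst p j = fst q j" using h[of "Some (j, _)"] by (simp add: vec_eq_iff)
  qed
  ultimately show ?thesis by (simp add: prod_eq_iff)
qed

lemma jet_coord_upd_jet_coord [simp]: "jet_coord_upd d (jet_coord d p) p = p"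
  by (rule jet_point_eqI) (metis jet_coord_upd_other jet_coord_upd_same)

lemma jet_coord_upd_upd [simp]: "jet_coord_upd d v (jet_coord_upd d w p) = jet_coord_upd d v p"
  by (rule jet_point_eqI) (metis jet_coord_upd_other jet_coord_upd_same)

lemma jet_coord_upd_commute:
  "d1 \<noteq> d2 \<Longrightarrow> jet_coord_upd d1 a (jet_coord_upd d2 b p) = jet_coord_upd d2 b (jet_coord_upd d1 a p)"
  by (rule jet_point_eqI) (metis jet_coord_upd_other jet_coord_upd_same)

lemma tendsto_fun_iff:
  fixes f :: "'a \<Rightarrow> 'i \<Rightarrow> 'b::topological_space"
  shows "(f \<longlongrightarrow> g) F \<longleftrightarrow> (\<forall>i. ((\<lambda>x. f x i) \<longlongrightarrow> g i) F)"
  by (simp flip: limitin_canonical_iff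
      add: euclidean_product_topology[symmetric] limitin_componentwise)

lemma tendsto_jet_coord:
  assumes "(x \<longlongrightarrow> p) F"
  shows "((\<lambda>s. jet_coord d (x s)) \<longlongrightarrow> jet_coord d p) F"
proof (cases d)
  case None
  then show ?thesis using tendsto_snd[OF assms] by simp
next
  case (Some a)
  then obtain j i where d: "d = Some (j, i)" by (cases a) auto
  have "((\<lambda>s. fst (x s)) \<longlongrightarrow> fst p) F" by (rule tendsto_fst[OF assms])
  then have "((\<lambda>s. fst (x s) j) \<longlongrightarrow> fst p j) F" by (simp add: tendsto_fun_iff)
  then show ?thesis using d by (simp add: tendsto_vec_nth)
qed

lemma tendsto_jet_pointI:
  assumes "\<And>d. ((\<lambda>s. jet_coord d (x s)) \<longlongrightarrow> jet_coord d p) F"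
  shows "(x \<longlongrightarrow> p) F"
proof -
  have "((\<lambda>s. (fst (x s), snd (x s))) \<longlongrightarrow> (fst p, snd p)) F"
  proof (rule tendsto_Pair)
    show "((\<lambda>s. snd (x s)) \<longlongrightarrow> snd p) F" using assms[of None] by simp
    show "((\<lambda>s. fst (x s)) \<longlongrightarrow> fst p) F"
      unfolding tendsto_fun_iff
      by (intro allI vec_tendstoI) (use assms[of "Some (_, _)"] in simp)
  qed
  then show ?thesis by simp
qed

lemma tendsto_jet_coord_upd:
  assumes "(v \<longlongrightarrow> a) F" and "(x \<longlongrightarrow> p) F"
  shows "((\<lambda>s. jet_coord_upd d (v s) (x s)) \<longlongrightarrow> jet_coord_upd d a p) F"
proof (rule tendsto_jet_pointI)
  fix d'
  show "((\<lambda>s. jet_coord d' (jet_coord_upd d (v s) (x s))) \<longlongrightarrow> jet_coord d' (jet_coord_upd d a p)) F"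
    using assms(1) tendsto_jet_coord[OF assms(2), of d']
    by (cases "d' = d") (simp_all add: jet_coord_upd_other)
qed

lemma tendsto_abs_bound:
  fixes x y :: "'a \<Rightarrow> real"
  assumes "(y \<longlongrightarrow> b) F" and "\<And>s. \<bar>x s - a\<bar> \<le> \<bar>y s - b\<bar>"
  shows "(x \<longlongrightarrow> a) F"
proof -
  have "((\<lambda>s. y s - b) \<longlongrightarrow> 0) F" using assms(1) by (rule LIM_zero)
  then have "((\<lambda>s. x s - a) \<longlongrightarrow> 0) F"
    by (rule tendsto_0_le[where K=1]) (auto intro: always_eventually simp: assms(2))
  then show ?thesis by (simp add: LIM_zero_iff)
qed

section \<open>Chain rule through finitely many jet coordinates\<close>

lemma MVT_abs:
  fixes \<phi> :: "real \<Rightarrow> real"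
  assumes "\<And>v. (\<phi> has_real_derivative \<phi>' v) (at v)"
  shows "\<exists>\<xi>. \<bar>\<xi> - a\<bar> \<le> \<bar>b - a\<bar> \<and> \<phi> b - \<phi> a = (b - a) * \<phi>' \<xi>"
proof -
  have cont: "continuous_on S \<phi>" for S
    using assms by (meson DERIV_isCont continuous_at_imp_continuous_on)
  have dif: "\<phi> differentiable (at x)" for x
    using assms real_differentiable_def by blast
  consider "a < b" | "b < a" | "a = b" by linarith
  then show ?thesis
  proof cases
    case 1
    then obtain l z where "a < z" "z < b" "DERIV \<phi> z :> l" "\<phi> b - \<phi> a = (b - a) * l"
      using MVT[OF 1 cont dif] by blast
    then show ?thesis using assms[of z] DERIV_unique by (intro exI[of _ z]) auto
  next
    case 2
    then obtain l z where "b < z" "z < a" "DERIV \<phi> z :> l" "\<phi> a - \<phi> b = (a - b) * l"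
      using MVT[OF 2 cont dif] by blast
    moreover have "l = \<phi>' z" using assms[of z] DERIV_unique \<open>DERIV \<phi> z :> l\<close> by blast
    ultimately show ?thesis
      by (intro exI[of _ z]) (auto simp: algebra_simps)
  qed auto
qed

text \<open>The mean value theorem writes the increment in one coordinate as \<open>(u s - u s\<^sub>0) \<cdot> g(\<xi> s)\<close>;
  continuity of \<open>g\<close> makes the Carath\'eodory quotient continuous.\<close>

lemma DERIV_jet_coord_increment:
  fixes f g :: "'n::finite jet_point \<Rightarrow> real"
  assumes g_cont: "isCont g (x s0)"
    and f_deriv: "\<And>p v. ((\<lambda>w. f (jet_coord_upd d w p)) has_real_derivative g (jet_coord_upd d v p)) (at v)"
    and x_deriv: "((\<lambda>s. jet_coord d (x s)) has_real_derivative x') (at s0)"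
    and x_cont: "(x \<longlongrightarrow> x s0) (at s0)"
  shows "((\<lambda>s. f (x s) - f (jet_coord_upd d (jet_coord d (x s0)) (x s))) has_real_derivative
           g (x s0) * x') (at s0)"
proof -
  define v0 where "v0 = jet_coord d (x s0)"
  define u where "u s = jet_coord d (x s)" for s
  have "(u has_real_derivative x') (at s0)" using x_deriv unfolding u_def .
  then obtain \<phi> where \<phi>: "\<And>z. u z - u s0 = \<phi> z * (z - s0)" "isCont \<phi> s0" "\<phi> s0 = x'"
    using CARAT_DERIV by blast
  have "\<exists>\<xi>. \<bar>\<xi> - v0\<bar> \<le> \<bar>u s - v0\<bar> \<and>
      f (jet_coord_upd d (u s) (x s)) - f (jet_coord_upd d v0 (x s))
        = (u s - v0) * g (jet_coord_upd d \<xi> (x s))" for s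
    by (rule MVT_abs[OF f_deriv])
  moreover have "jet_coord_upd d (u s) (x s) = x s" for s by (simp add: u_def)
  ultimately obtain \<xi> where \<xi>: "\<And>s. \<bar>\<xi> s - v0\<bar> \<le> \<bar>u s - v0\<bar>"
    "\<And>s. f (x s) - f (jet_coord_upd d v0 (x s)) = (u s - v0) * g (jet_coord_upd d (\<xi> s) (x s))"
    by metis
  define a where "a s = g (jet_coord_upd d (\<xi> s) (x s))" for s
  have \<xi>0: "\<xi> s0 = v0" using \<xi>(1)[of s0] by (simp add: u_def v0_def)
  have "(u \<longlongrightarrow> v0) (at s0)"
    using DERIV_isCont[OF x_deriv] unfolding isCont_def u_def v0_def .
  then have "(\<xi> \<longlongrightarrow> v0) (at s0)" using \<xi>(1) by (rule tendsto_abs_bound)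
  from tendsto_jet_coord_upd[OF this x_cont, of d]
  have "((\<lambda>s. jet_coord_upd d (\<xi> s) (x s)) \<longlongrightarrow> x s0) (at s0)" by (simp add: v0_def)
  from isCont_tendsto_compose[OF g_cont this] have "isCont a s0"
    unfolding isCont_def a_def by (simp add: \<xi>0 v0_def)
  then have "isCont (\<lambda>s. a s * \<phi> s) s0" using \<phi>(2) by (intro isCont_mult)
  moreover have "f (x s) - f (jet_coord_upd d v0 (x s)) = a s * \<phi> s * (s - s0)" for s
    using \<xi>(2)[of s] \<phi>(1)[of s] by (simp add: u_def a_def v0_def)
  ultimately show ?thesis
    unfolding CARAT_DERIV v0_def[symmetric]
    by (intro exI[of _ "\<lambda>s. a s * \<phi> s"]) (simp add: \<phi>(3) a_def \<xi>0 v0_def)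
qed

lemma tendsto_at_jet_coords:
  assumes "\<And>d. d \<in> D \<Longrightarrow> ((\<lambda>s. jet_coord d (x s)) has_real_derivative x' d) (at s0)"
    and "\<And>d s. d \<notin> D \<Longrightarrow> jet_coord d (x s) = jet_coord d (x s0)"
  shows "(x \<longlongrightarrow> x s0) (at s0)"
proof (rule tendsto_jet_pointI)
  fix d
  show "((\<lambda>s. jet_coord d (x s)) \<longlongrightarrow> jet_coord d (x s0)) (at s0)"
  proof (cases "d \<in> D")
    case True
    then show ?thesis using DERIV_isCont[OF assms(1)] by (simp add: isCont_def)
  next
    case False
    then have "(\<lambda>s. jet_coord d (x s)) = (\<lambda>s. jet_coord d (x s0))" using assms(2) by blast
    then show ?thesis by simp
  qed
qed

lemma DERIV_jet_coords:
  fixes f :: "'n::finite jet_point \<Rightarrow> real"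
  assumes "finite D"
    and "\<And>d. d \<in> D \<Longrightarrow> continuous_on UNIV (g d)"
    and "\<And>d p v. d \<in> D \<Longrightarrow>
           ((\<lambda>w. f (jet_coord_upd d w p)) has_real_derivative g d (jet_coord_upd d v p)) (at v)"
    and "\<And>d. d \<in> D \<Longrightarrow> ((\<lambda>s. jet_coord d (x s)) has_real_derivative x' d) (at s0)"
    and "\<And>d s. d \<notin> D \<Longrightarrow> jet_coord d (x s) = jet_coord d (x s0)"
  shows "((\<lambda>s. f (x s)) has_real_derivative (\<Sum>d\<in>D. g d (x s0) * x' d)) (at s0)"
  using assms
proof (induction D arbitrary: x rule: finite_induct)
  case empty
  have "x s = x s0" for s
    by (rule jet_point_eqI) (use empty.prems(4) in blast)
  then have "(\<lambda>s. f (x s)) = (\<lambda>s. f (x s0))" by metis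
  then show ?case by simp
next
  case (insert d D)
  note g_cont = insert.prems(1) and f_deriv = insert.prems(2)
    and x_deriv = insert.prems(3) and x_const = insert.prems(4)
  define xt where "xt s = jet_coord_upd d (jet_coord d (x s0)) (x s)" for s
  have xt0: "xt s0 = x s0" by (simp add: xt_def)
  have "((\<lambda>s. f (xt s)) has_real_derivative (\<Sum>d'\<in>D. g d' (xt s0) * x' d')) (at s0)"
  proof (rule insert.IH)
    show "continuous_on UNIV (g d')"
      and "((\<lambda>w. f (jet_coord_upd d' w p)) has_real_derivative g d' (jet_coord_upd d' v p)) (at v)"
      if "d' \<in> D" for d' p v
      using that g_cont f_deriv by blast+
    show "((\<lambda>s. jet_coord d' (xt s)) has_real_derivative x' d') (at s0)" if "d' \<in> D" for d'
    proof -
      have "d' \<noteq> d" using that insert.hyps(2) by blast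
      then show ?thesis using that x_deriv[of d'] by (simp add: xt_def jet_coord_upd_other)
    qed
    show "jet_coord d' (xt s) = jet_coord d' (xt s0)" if "d' \<notin> D" for d' s
      using that x_const[of d' s] by (cases "d' = d") (simp_all add: xt_def jet_coord_upd_other)
  qed
  moreover have "((\<lambda>s. f (x s) - f (xt s)) has_real_derivative g d (x s0) * x' d) (at s0)"
    unfolding xt_def
  proof (rule DERIV_jet_coord_increment)
    show "isCont (g d) (x s0)" using g_cont continuous_on_eq_continuous_at by blast
    show "(x \<longlongrightarrow> x s0) (at s0)" using x_deriv x_const by (rule tendsto_at_jet_coords)
  qed (use f_deriv x_deriv in blast)+
  ultimately have "((\<lambda>s. (f (x s) - f (xt s)) + f (xt s)) has_real_derivative
      g d (x s0) * x' d + (\<Sum>d'\<in>D. g d' (xt s0) * x' d')) (at s0)"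
    by (intro DERIV_add)
  then show ?case using insert.hyps by (simp add: xt0)
qed

section \<open>Partial derivatives and smoothness of jet functions\<close>

fun shift_coord :: "(nat \<times> 'n::finite) option \<Rightarrow> real \<Rightarrow> (nat \<Rightarrow> real^'n) \<Rightarrow> real \<Rightarrow> 'n jet_point"
  where
    "shift_coord None s J t = (J, t + s)"
  | "shift_coord (Some (j, i)) s J t = (J(j := J j + s *\<^sub>R axis i 1), t)"

lemma shift_coord_0 [simp]: "shift_coord d 0 J t = (J, t)"
  by (cases d) auto

lemma shift_coord_eq_upd: "shift_coord d s J t = jet_coord_upd d (jet_coord d (J, t) + s) (J, t)"
  by (cases d) auto

definition partial_jet :: "(nat \<times> 'n::finite) option \<Rightarrow> 'n jet_fun \<Rightarrow> 'n jet_fun" where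
  "partial_jet d F J t = deriv (\<lambda>s. case_prod F (shift_coord d s J t)) 0"

definition has_partial :: "(nat \<times> 'n::finite) option \<Rightarrow> 'n jet_fun \<Rightarrow> 'n jet_fun \<Rightarrow> bool" where
  "has_partial d F G \<longleftrightarrow>
     (\<forall>J t. ((\<lambda>s. case_prod F (shift_coord d s J t)) has_real_derivative G J t) (at 0))"

lemma partial_jet_None: "partial_jet None F = dtJ F"
  by (intro ext) (simp add: partial_jet_def dtJ_def case_prod_unfold)

lemma partial_jet_Some: "partial_jet (Some (j, i)) F J t = gradJ j F J t $ i"
  by (simp add: partial_jet_def gradJ_def case_prod_unfold)

lemma has_partial_imp_eq: "has_partial d F G \<Longrightarrow> partial_jet d F = G"
  unfolding has_partial_def partial_jet_def by (intro ext) (simp add: DERIV_imp_deriv)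

lemma has_partial_partial_jet: "has_partial d F G \<Longrightarrow> has_partial d F (partial_jet d F)"
  using has_partial_imp_eq by metis

lemma has_partial_coord_upd:
  assumes "has_partial d F G"
  shows "((\<lambda>w. case_prod F (jet_coord_upd d w p)) has_real_derivative
           case_prod G (jet_coord_upd d v p)) (at v)"
proof -
  obtain J t where q: "jet_coord_upd d v p = (J, t)" by (cases "jet_coord_upd d v p") auto
  have "((\<lambda>s. case_prod F (shift_coord d s J t)) has_real_derivative G J t) (at 0)"
    using assms by (simp add: has_partial_def)
  moreover have "shift_coord d s J t = jet_coord_upd d (s + v) p" for s
    unfolding shift_coord_eq_upd q[symmetric] by (simp add: add.commute)
  ultimately have "((\<lambda>s. case_prod F (jet_coord_upd d (s + v) p)) has_real_derivative
      case_prod G (jet_coord_upd d v p)) (at 0)"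
    using q by (simp add: case_prod_unfold)
  then show ?thesis
    using DERIV_shift[of "\<lambda>w. case_prod F (jet_coord_upd d w p)" _ 0 v] by simp
qed

lemma has_partial_imp_slot_derivatives:
  assumes "\<forall>d. \<exists>G. has_partial d F G \<and> P G"
  shows "(\<forall>j i. \<exists>G. (\<forall>J t. ((\<lambda>s. F (J(j := J j + s *\<^sub>R axis i 1)) t) has_real_derivative G J t) (at 0))
            \<and> P G)
     \<and> (\<exists>G. (\<forall>J t. ((\<lambda>s. F J (t + s)) has_real_derivative G J t) (at 0)) \<and> P G)"
proof (intro conjI allI)
  fix j i
  obtain G where "has_partial (Some (j, i)) F G" "P G" using assms by blast
  then show "\<exists>G. (\<forall>J t. ((\<lambda>s. F (J(j := J j + s *\<^sub>R axis i 1)) t) has_real_derivative G J t) (at 0))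
      \<and> P G"
    by (intro exI[of _ G]) (simp add: has_partial_def case_prod_unfold)
next
  obtain G where "has_partial None F G" "P G" using assms by blast
  then show "\<exists>G. (\<forall>J t. ((\<lambda>s. F J (t + s)) has_real_derivative G J t) (at 0)) \<and> P G"
    by (intro exI[of _ G]) (simp add: has_partial_def case_prod_unfold)
qed

lemma smoothJ_iff:
  "smoothJ F \<longleftrightarrow> continuous_on UNIV (case_prod F) \<and> (\<forall>d. \<exists>G. has_partial d F G \<and> smoothJ G)"
proof
  assume "smoothJ F"
  then show "continuous_on UNIV (case_prod F) \<and> (\<forall>d. \<exists>G. has_partial d F G \<and> smoothJ G)"
  proof cases
    case 1
    show ?thesis
    proof (intro conjI allI)
      show "continuous_on UNIV (case_prod F)" using 1 by (simp add: case_prod_unfold)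
      fix d show "\<exists>G. has_partial d F G \<and> smoothJ G"
      proof (cases d)
        case None then show ?thesis using 1(3) by (auto simp: has_partial_def case_prod_unfold)
      next
        case (Some a) then obtain j i where "d = Some (j, i)" by (cases a) auto
        then show ?thesis using 1(2) by (auto simp: has_partial_def case_prod_unfold)
      qed
    qed
  qed
next
  assume h: "continuous_on UNIV (case_prod F) \<and> (\<forall>d. \<exists>G. has_partial d F G \<and> smoothJ G)"
  then have "continuous_on UNIV (\<lambda>p. F (fst p) (snd p))" by (simp add: case_prod_unfold)
  with has_partial_imp_slot_derivatives[of F smoothJ] h show "smoothJ F"
    by (blast intro: smoothJ.intros)
qed

lemma smoothJ_has_partial: "smoothJ F \<Longrightarrow> has_partial d F (partial_jet d F)"
  using smoothJ_iff has_partial_partial_jet by metis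

lemma smoothJ_partial_jet: "smoothJ F \<Longrightarrow> smoothJ (partial_jet d F)"
  using smoothJ_iff has_partial_imp_eq by metis

lemma smoothJ_continuous: "smoothJ F \<Longrightarrow> continuous_on UNIV (case_prod F)"
  using smoothJ_iff by metis

lemma smoothJ_coinduct_partial:
  assumes "X F"
    and step: "\<And>F. X F \<Longrightarrow> continuous_on UNIV (case_prod F)
                  \<and> (\<forall>d. \<exists>G. has_partial d F G \<and> (X G \<or> smoothJ G))"
  shows "smoothJ F"
proof (rule smoothJ.coinduct[of X, OF assms(1)])
  fix F assume "X F"
  then have "continuous_on UNIV (\<lambda>p. F (fst p) (snd p))"
    "\<forall>d. \<exists>G. has_partial d F G \<and> (X G \<or> smoothJ G)"
    using step by (auto simp: case_prod_unfold)
  with has_partial_imp_slot_derivatives[of F "\<lambda>G. X G \<or> smoothJ G"]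
  show "\<exists>F'. F = F' \<and> continuous_on UNIV (\<lambda>p. F' (fst p) (snd p)) \<and>
      (\<forall>j i. \<exists>G. (\<forall>J t. ((\<lambda>s. F' (J(j := J j + s *\<^sub>R axis i 1)) t) has_real_derivative G J t) (at 0))
        \<and> (X G \<or> smoothJ G)) \<and>
      (\<exists>G. (\<forall>J t. ((\<lambda>s. F' J (t + s)) has_real_derivative G J t) (at 0)) \<and> (X G \<or> smoothJ G))"
    by blast
qed

lemma has_partial_const: "has_partial d (\<lambda>J t. c) (\<lambda>J t. 0)"
  by (simp add: has_partial_def case_prod_unfold)

lemma smoothJ_const: "smoothJ (\<lambda>J t. c)"
  by (rule smoothJ_coinduct_partial[where X="\<lambda>F. \<exists>c. F = (\<lambda>J t. c)"])
     (auto simp: case_prod_unfold has_partial_const intro!: exI[of _ "\<lambda>J t. 0"])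

lemma has_partial_add:
  "has_partial d F F' \<Longrightarrow> has_partial d G G' \<Longrightarrow>
    has_partial d (\<lambda>J t. F J t + G J t) (\<lambda>J t. F' J t + G' J t)"
  unfolding has_partial_def case_prod_unfold by (auto intro: DERIV_add)

lemma has_partial_mult:
  "has_partial d F F' \<Longrightarrow> has_partial d G G' \<Longrightarrow>
    has_partial d (\<lambda>J t. F J t * G J t) (\<lambda>J t. F' J t * G J t + F J t * G' J t)"
  unfolding has_partial_def case_prod_unfold
  by (auto intro!: derivative_eq_intros simp: algebra_simps)

lemma has_partial_sum:
  "finite A \<Longrightarrow> (\<And>a. a \<in> A \<Longrightarrow> has_partial d (F a) (G a)) \<Longrightarrow>
    has_partial d (\<lambda>J t. \<Sum>a\<in>A. F a J t) (\<lambda>J t. \<Sum>a\<in>A. G a J t)"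
  unfolding has_partial_def case_prod_unfold by (auto intro!: DERIV_sum)

text \<open>The ring generated by the smooth jet functions is closed under partial derivatives, so it is
  an invariant for coinduction; this gives closure of \<open>smoothJ\<close> under sums and products.\<close>

inductive_set smoothJ_ring :: "'n::finite jet_fun set" where
  base: "smoothJ F \<Longrightarrow> F \<in> smoothJ_ring"
| add: "F \<in> smoothJ_ring \<Longrightarrow> G \<in> smoothJ_ring \<Longrightarrow> (\<lambda>J t. F J t + G J t) \<in> smoothJ_ring"
| mult: "F \<in> smoothJ_ring \<Longrightarrow> G \<in> smoothJ_ring \<Longrightarrow> (\<lambda>J t. F J t * G J t) \<in> smoothJ_ring"

lemma smoothJ_ring_has_partial:
  "F \<in> smoothJ_ring \<Longrightarrow>
    continuous_on UNIV (case_prod F) \<and> (\<forall>d. \<exists>G. has_partial d F G \<and> G \<in> smoothJ_ring)"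
proof (induction rule: smoothJ_ring.induct)
  case (base F)
  then show ?case using smoothJ_iff smoothJ_ring.base by metis
next
  case (add F G)
  show ?case
  proof (intro conjI allI)
    show "continuous_on UNIV (case_prod (\<lambda>J t. F J t + G J t))"
      using add.IH by (simp add: case_prod_unfold continuous_on_add)
    fix d
    obtain F' where F': "has_partial d F F'" "F' \<in> smoothJ_ring" using add.IH(1) by blast
    obtain G' where G': "has_partial d G G'" "G' \<in> smoothJ_ring" using add.IH(2) by blast
    show "\<exists>H. has_partial d (\<lambda>J t. F J t + G J t) H \<and> H \<in> smoothJ_ring"
      using has_partial_add[OF F'(1) G'(1)] smoothJ_ring.add[OF F'(2) G'(2)] by blast
  qed
next
  case (mult F G)
  show ?case
  proof (intro conjI allI)
    show "continuous_on UNIV (case_prod (\<lambda>J t. F J t * G J t))"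
      using mult.IH by (simp add: case_prod_unfold continuous_on_mult)
    fix d
    obtain F' where F': "has_partial d F F'" "F' \<in> smoothJ_ring" using mult.IH(1) by blast
    obtain G' where G': "has_partial d G G'" "G' \<in> smoothJ_ring" using mult.IH(2) by blast
    have "(\<lambda>J t. F' J t * G J t + F J t * G' J t) \<in> smoothJ_ring"
      using F'(2) G'(2) mult.hyps by (intro smoothJ_ring.add smoothJ_ring.mult)
    then show "\<exists>H. has_partial d (\<lambda>J t. F J t * G J t) H \<and> H \<in> smoothJ_ring"
      using has_partial_mult[OF F'(1) G'(1)] by blast
  qed
qed

lemma smoothJ_ring_smoothJ:
  fixes F :: "'n::finite jet_fun"
  assumes "F \<in> smoothJ_ring"
  shows "smoothJ F"
proof (rule smoothJ_coinduct_partial[where X="\<lambda>F. F \<in> smoothJ_ring", OF assms])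
  fix F :: "'n jet_fun" assume "F \<in> smoothJ_ring"
  then show "continuous_on UNIV (case_prod F)
      \<and> (\<forall>d. \<exists>G. has_partial d F G \<and> (G \<in> smoothJ_ring \<or> smoothJ G))"
    using smoothJ_ring_has_partial by blast
qed

lemma smoothJ_add: "smoothJ F \<Longrightarrow> smoothJ G \<Longrightarrow> smoothJ (\<lambda>J t. F J t + G J t)"
  by (rule smoothJ_ring_smoothJ[OF smoothJ_ring.add[OF smoothJ_ring.base smoothJ_ring.base]])

lemma smoothJ_mult: "smoothJ F \<Longrightarrow> smoothJ G \<Longrightarrow> smoothJ (\<lambda>J t. F J t * G J t)"
  by (rule smoothJ_ring_smoothJ[OF smoothJ_ring.mult[OF smoothJ_ring.base smoothJ_ring.base]])

lemma smoothJ_sum: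
  "finite A \<Longrightarrow> (\<And>a. a \<in> A \<Longrightarrow> smoothJ (F a)) \<Longrightarrow> smoothJ (\<lambda>J t. \<Sum>a\<in>A. F a J t)"
proof (induction A rule: finite_induct)
  case empty then show ?case by (simp add: smoothJ_const)
next
  case (insert x A)
  then show ?case using smoothJ_add[of "F x" "\<lambda>J t. \<Sum>a\<in>A. F a J t"] by simp
qed

lemma has_partial_jet_var:
  "has_partial d (\<lambda>J t. J p $ m) (\<lambda>J t. if d = Some (p, m) then 1 else 0)"
proof -
  have "case_prod (\<lambda>J t. J p $ m) (shift_coord d s J t)
      = J p $ m + s * (if d = Some (p, m) then 1 else 0)" for s J t
    by (cases d) (auto simp: axis_def split: if_split_asm)
  then show ?thesis
    unfolding has_partial_def by (auto intro!: derivative_eq_intros)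
qed

lemma smoothJ_jet_var:
  fixes m :: "'n::finite"
  shows "smoothJ (\<lambda>J t. J p $ m)"
proof (rule smoothJ_coinduct_partial[where X="\<lambda>F. F = (\<lambda>J t. J p $ m)"])
  fix F :: "'n jet_fun" assume F: "F = (\<lambda>J t. J p $ m)"
  have "continuous_on UNIV (\<lambda>x::'n jet_point. fst x p)"
    by (rule continuous_on_compose2[OF continuous_on_product_coordinates continuous_on_fst]) auto
  then have "continuous_on UNIV (case_prod F)"
    unfolding F case_prod_unfold by (rule continuous_on_component)
  moreover have "has_partial d F (\<lambda>J t. if d = Some (p, m) then 1 else 0)" for d
    unfolding F by (rule has_partial_jet_var)
  ultimately show "continuous_on UNIV (case_prod F)
      \<and> (\<forall>d. \<exists>G. has_partial d F G \<and> (G = (\<lambda>J t. J p $ m) \<or> smoothJ G))"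
    using smoothJ_const by blast
qed (rule refl)

lemma has_partial_smoothE:
  fixes f :: "(real^'n::finite) \<times> real \<Rightarrow> real"
  assumes "smoothE f"
  shows "\<exists>G. has_partial d (\<lambda>J t. f (J 0, t)) G
           \<and> ((\<exists>g. smoothE g \<and> G = (\<lambda>J t. g (J 0, t))) \<or> G = (\<lambda>J t. 0))"
proof -
  have df: "\<exists>g. (\<forall>x. ((\<lambda>s. f (x + s *\<^sub>R b)) has_real_derivative g x) (at 0)) \<and> smoothE g"
    if "b \<in> Basis" for b
    using assms that smoothE.simps[of f] by blast
  show ?thesis
  proof (cases d)
    case None
    obtain g where g: "\<forall>x. ((\<lambda>s. f (x + s *\<^sub>R (0, 1))) has_real_derivative g x) (at 0)" "smoothE g"
      using df[of "(0, 1)"] by (auto simp: Basis_prod_def)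
    then have "has_partial d (\<lambda>J t. f (J 0, t)) (\<lambda>J t. g (J 0, t))"
      using None by (simp add: has_partial_def case_prod_unfold)
    then show ?thesis using g(2) by blast
  next
    case (Some a)
    then obtain j i where d: "d = Some (j, i)" by (cases a) auto
    show ?thesis
    proof (cases "j = 0")
      case True
      obtain g where g: "\<forall>x. ((\<lambda>s. f (x + s *\<^sub>R (axis i 1, 0))) has_real_derivative g x) (at 0)"
        "smoothE g"
        using df[of "(axis i 1, 0)"] by (auto simp: Basis_prod_def)
      then have "has_partial d (\<lambda>J t. f (J 0, t)) (\<lambda>J t. g (J 0, t))"
        using d True by (simp add: has_partial_def case_prod_unfold)
      then show ?thesis using g(2) by blast
    next
      case False
      then have "has_partial d (\<lambda>J t. f (J 0, t)) (\<lambda>J t. 0)"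
        using d by (simp add: has_partial_def case_prod_unfold)
      then show ?thesis by blast
    qed
  qed
qed

lemma smoothJ_smoothE:
  fixes f :: "(real^'n::finite) \<times> real \<Rightarrow> real"
  assumes "smoothE f"
  shows "smoothJ (\<lambda>J t. f (J 0, t))"
proof (rule smoothJ_coinduct_partial[where X="\<lambda>F. \<exists>f. smoothE f \<and> F = (\<lambda>J t. f (J 0, t))"])
  fix F :: "'n jet_fun"
  assume "\<exists>f. smoothE f \<and> F = (\<lambda>J t. f (J 0, t))"
  then obtain f where f: "smoothE f" and F: "F = (\<lambda>J t. f (J 0, t))" by blast
  have "continuous_on UNIV f" using f smoothE.simps[of f] by blast
  moreover have "continuous_on UNIV (\<lambda>x::'n jet_point. (fst x 0, snd x))"
    by (intro continuous_on_Pair continuous_on_snd continuous_on_id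
        continuous_on_compose2[OF continuous_on_product_coordinates continuous_on_fst]) auto
  ultimately have "continuous_on UNIV (case_prod F)"
    unfolding F case_prod_unfold by (rule continuous_on_compose2) auto
  moreover have "\<exists>G. has_partial d F G \<and> ((\<exists>f. smoothE f \<and> G = (\<lambda>J t. f (J 0, t))) \<or> smoothJ G)"
    for d
  proof -
    obtain G where G: "has_partial d F G"
      "(\<exists>g. smoothE g \<and> G = (\<lambda>J t. g (J 0, t))) \<or> G = (\<lambda>J t. 0)"
      using has_partial_smoothE[OF f, of d] unfolding F by blast
    then show ?thesis using smoothJ_const[of 0] by blast
  qed
  ultimately show "continuous_on UNIV (case_prod F)
      \<and> (\<forall>d. \<exists>G. has_partial d F G \<and> ((\<exists>f. smoothE f \<and> G = (\<lambda>J t. f (J 0, t))) \<or> smoothJ G))"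
    by blast
qed (use assms in blast)

lemma depends_upto_partial_jet:
  fixes F :: "'n::finite jet_fun"
  assumes "depends_upto N F"
  shows "depends_upto N (partial_jet d F)"
  unfolding depends_upto_def
proof (intro allI impI)
  fix J J' :: "nat \<Rightarrow> real^'n" and t assume J: "\<forall>j\<le>N. J j = J' j"
  have "case_prod F (shift_coord d s J t) = case_prod F (shift_coord d s J' t)" for s
    using assms J unfolding depends_upto_def by (cases d) (auto simp: case_prod_unfold)
  then show "partial_jet d F J t = partial_jet d F J' t" by (simp add: partial_jet_def)
qed

lemma partial_jet_beyond_depends:
  fixes F :: "'n::finite jet_fun"
  assumes "depends_upto N F" and "N < j"
  shows "partial_jet (Some (j, i)) F = (\<lambda>J t. 0)"
proof (intro ext)
  fix J t
  have "case_prod F (shift_coord (Some (j, i)) s J t) = F J t" for s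
    using assms unfolding depends_upto_def by (simp add: case_prod_unfold)
  then show "partial_jet (Some (j, i)) F J t = 0" by (simp add: partial_jet_def)
qed

lemma depends_upto_mono: "depends_upto N F \<Longrightarrow> N \<le> M \<Longrightarrow> depends_upto M F"
  unfolding depends_upto_def by auto

text \<open>Freezing the slots above \<open>N\<close>, which \<open>F\<close> does not see, leaves finitely many moving
  coordinates, so \<open>DERIV_jet_coords\<close> applies.\<close>

lemma DERIV_jet_chain:
  fixes F :: "'n::finite jet_fun"
  assumes F: "smoothJ F" "depends_upto N F"
    and X_deriv: "\<And>j m. j \<le> N \<Longrightarrow> ((\<lambda>s. X s j $ m) has_real_derivative X' j m) (at s0)"
    and T_deriv: "(T has_real_derivative T') (at s0)"
  shows "((\<lambda>s. F (X s) (T s)) has_real_derivative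
      (\<Sum>j\<le>N. \<Sum>m\<in>UNIV. partial_jet (Some (j, m)) F (X s0) (T s0) * X' j m)
        + partial_jet None F (X s0) (T s0) * T') (at s0)"
proof -
  define x where "x s = ((\<lambda>j. if j \<le> N then X s j else X s0 j), T s)" for s
  define P where "P = {..N} \<times> (UNIV :: 'n set)"
  define D where "D = insert None (Some ` P)"
  define x' where "x' d = (case d of None \<Rightarrow> T' | Some (j, m) \<Rightarrow> X' j m)" for d
  have x0: "x s0 = (X s0, T s0)" by (simp add: x_def)
  have "F (X s) (T s) = case_prod F (x s)" for s
    using F(2) unfolding depends_upto_def by (auto simp: x_def)
  moreover have "((\<lambda>s. case_prod F (x s)) has_real_derivative
      (\<Sum>d\<in>D. case_prod (partial_jet d F) (x s0) * x' d)) (at s0)"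
  proof (rule DERIV_jet_coords)
    show "finite D" by (simp add: D_def P_def)
    show "continuous_on UNIV (case_prod (partial_jet d F))" if "d \<in> D" for d
      using F(1) by (intro smoothJ_continuous smoothJ_partial_jet)
    show "((\<lambda>w. case_prod F (jet_coord_upd d w p)) has_real_derivative
        case_prod (partial_jet d F) (jet_coord_upd d v p)) (at v)" if "d \<in> D" for d p v
      by (rule has_partial_coord_upd[OF smoothJ_has_partial[OF F(1)]])
    show "((\<lambda>s. jet_coord d (x s)) has_real_derivative x' d) (at s0)" if "d \<in> D" for d
      using that X_deriv T_deriv by (auto simp: D_def P_def x_def x'_def)
    show "jet_coord d (x s) = jet_coord d (x s0)" if "d \<notin> D" for d s
      using that by (cases d) (auto simp: D_def P_def x_def)
  qed
  moreover have "(\<Sum>d\<in>D. case_prod (partial_jet d F) (x s0) * x' d) =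
      (\<Sum>j\<le>N. \<Sum>m\<in>UNIV. partial_jet (Some (j, m)) F (X s0) (T s0) * X' j m)
        + partial_jet None F (X s0) (T s0) * T'"
  proof -
    have "(\<Sum>d\<in>Some ` P. case_prod (partial_jet d F) (x s0) * x' d)
        = (\<Sum>(j, m)\<in>P. partial_jet (Some (j, m)) F (X s0) (T s0) * X' j m)"
      by (subst sum.reindex) (auto simp: x0 x'_def intro!: sum.cong)
    then show ?thesis
      by (simp add: D_def P_def x0 x'_def sum.cartesian_product)
  qed
  ultimately show ?thesis by simp
qed

section \<open>Symmetry of second partial derivatives\<close>

lemma second_difference_mvt:
  fixes f f1 f12 :: "'n::finite jet_point \<Rightarrow> real" and p :: "'n jet_point"
  assumes "d1 \<noteq> d2"
    and h1: "\<And>p v. ((\<lambda>w. f (jet_coord_upd d1 w p)) has_real_derivative f1 (jet_coord_upd d1 v p)) (at v)"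
    and h12: "\<And>p v. ((\<lambda>w. f1 (jet_coord_upd d2 w p)) has_real_derivative f12 (jet_coord_upd d2 v p)) (at v)"
  defines "Q a b \<equiv> jet_coord_upd d1 a (jet_coord_upd d2 b p)"
  shows "\<exists>\<xi> \<eta>. \<bar>\<xi> - a\<bar> \<le> \<bar>h\<bar> \<and> \<bar>\<eta> - b\<bar> \<le> \<bar>h\<bar> \<and>
    f (Q (a + h) (b + h)) - f (Q (a + h) b) - f (Q a (b + h)) + f (Q a b) = h * (h * f12 (Q \<xi> \<eta>))"
proof -
  define g where "g x = f (Q x (b + h)) - f (Q x b)" for x
  define g' where "g' x = f1 (Q x (b + h)) - f1 (Q x b)" for x
  have "(g has_real_derivative g' v) (at v)" for v
    unfolding g_def g'_def Q_def by (intro DERIV_diff h1)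
  then obtain \<xi> where \<xi>: "\<bar>\<xi> - a\<bar> \<le> \<bar>(a + h) - a\<bar>" "g (a + h) - g a = ((a + h) - a) * g' \<xi>"
    using MVT_abs by blast
  define k where "k y = f1 (jet_coord_upd d2 y (jet_coord_upd d1 \<xi> p))" for y
  have "(k has_real_derivative f12 (jet_coord_upd d2 v (jet_coord_upd d1 \<xi> p))) (at v)" for v
    unfolding k_def by (rule h12)
  then obtain \<eta> where \<eta>: "\<bar>\<eta> - b\<bar> \<le> \<bar>(b + h) - b\<bar>"
      "k (b + h) - k b = ((b + h) - b) * f12 (jet_coord_upd d2 \<eta> (jet_coord_upd d1 \<xi> p))"
    using MVT_abs[of k "\<lambda>v. f12 (jet_coord_upd d2 v (jet_coord_upd d1 \<xi> p))"] by blast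
  have "g' \<xi> = k (b + h) - k b"
    unfolding g'_def k_def Q_def using jet_coord_upd_commute[OF assms(1)] by simp
  then have "g (a + h) - g a = h * (h * f12 (Q \<xi> \<eta>))"
    using \<xi>(2) \<eta>(2) jet_coord_upd_commute[OF assms(1)] by (simp add: Q_def)
  then show ?thesis using \<xi>(1) \<eta>(1) by (intro exI[of _ \<xi>] exI[of _ \<eta>]) (auto simp: g_def)
qed

text \<open>Clairaut: both mixed partials are limits of the same second difference quotient.\<close>

lemma clairaut:
  fixes f f1 f2 f12 f21 :: "'n::finite jet_point \<Rightarrow> real"
  assumes "d1 \<noteq> d2"
    and h1: "\<And>p v. ((\<lambda>w. f (jet_coord_upd d1 w p)) has_real_derivative f1 (jet_coord_upd d1 v p)) (at v)"
    and h2: "\<And>p v. ((\<lambda>w. f (jet_coord_upd d2 w p)) has_real_derivative f2 (jet_coord_upd d2 v p)) (at v)"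
    and h12: "\<And>p v. ((\<lambda>w. f1 (jet_coord_upd d2 w p)) has_real_derivative f12 (jet_coord_upd d2 v p)) (at v)"
    and h21: "\<And>p v. ((\<lambda>w. f2 (jet_coord_upd d1 w p)) has_real_derivative f21 (jet_coord_upd d1 v p)) (at v)"
    and "continuous_on UNIV f12" and "continuous_on UNIV f21"
  shows "f12 p = f21 p"
proof -
  define a where "a = jet_coord d1 p"
  define b where "b = jet_coord d2 p"
  define Q where "Q x y = jet_coord_upd d1 x (jet_coord_upd d2 y p)" for x y
  have "\<forall>h. \<exists>\<xi> \<eta>. \<bar>\<xi> - a\<bar> \<le> \<bar>h\<bar> \<and> \<bar>\<eta> - b\<bar> \<le> \<bar>h\<bar> \<and>
      f (Q (a + h) (b + h)) - f (Q (a + h) b) - f (Q a (b + h)) + f (Q a b) = h * (h * f12 (Q \<xi> \<eta>))"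
    unfolding Q_def using second_difference_mvt[OF assms(1) h1 h12] by blast
  then obtain \<xi> \<eta> where A: "\<And>h. \<bar>\<xi> h - a\<bar> \<le> \<bar>h\<bar>" "\<And>h. \<bar>\<eta> h - b\<bar> \<le> \<bar>h\<bar>"
    "\<And>h. f (Q (a + h) (b + h)) - f (Q (a + h) b) - f (Q a (b + h)) + f (Q a b)
      = h * (h * f12 (Q (\<xi> h) (\<eta> h)))"
    by metis
  have "\<forall>h. \<exists>\<xi> \<eta>. \<bar>\<xi> - b\<bar> \<le> \<bar>h\<bar> \<and> \<bar>\<eta> - a\<bar> \<le> \<bar>h\<bar> \<and>
      f (Q (a + h) (b + h)) - f (Q a (b + h)) - f (Q (a + h) b) + f (Q a b) = h * (h * f21 (Q \<eta> \<xi>))"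
    unfolding Q_def jet_coord_upd_commute[OF assms(1)]
    using second_difference_mvt[OF assms(1)[symmetric] h2 h21] by blast
  then obtain \<xi>' \<eta>' where B: "\<And>h. \<bar>\<xi>' h - b\<bar> \<le> \<bar>h\<bar>" "\<And>h. \<bar>\<eta>' h - a\<bar> \<le> \<bar>h\<bar>"
    "\<And>h. f (Q (a + h) (b + h)) - f (Q a (b + h)) - f (Q (a + h) b) + f (Q a b)
      = h * (h * f21 (Q (\<eta>' h) (\<xi>' h)))"
    by metis
  have "f12 (Q (\<xi> h) (\<eta> h)) = f21 (Q (\<eta>' h) (\<xi>' h))" if "h \<noteq> 0" for h
    using A(3)[of h] B(3)[of h] that by (simp add: algebra_simps)
  then have eq: "\<forall>\<^sub>F h in at 0. f12 (Q (\<xi> h) (\<eta> h)) = f21 (Q (\<eta>' h) (\<xi>' h))"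
    by (auto simp: eventually_at_filter)
  have Q_lim: "((\<lambda>h. Q (x h) (y h)) \<longlongrightarrow> p) (at 0)"
    if "\<And>h. \<bar>x h - a\<bar> \<le> \<bar>h\<bar>" "\<And>h. \<bar>y h - b\<bar> \<le> \<bar>h\<bar>" for x y :: "real \<Rightarrow> real"
  proof -
    have "(x \<longlongrightarrow> a) (at 0)" "(y \<longlongrightarrow> b) (at 0)"
      using that by (auto intro: tendsto_abs_bound[OF tendsto_ident_at])
    then have "((\<lambda>h. Q (x h) (y h)) \<longlongrightarrow> Q a b) (at 0)"
      unfolding Q_def by (intro tendsto_jet_coord_upd tendsto_const)
    then show ?thesis by (simp add: Q_def a_def b_def)
  qed
  have l12: "((\<lambda>h. f12 (Q (\<xi> h) (\<eta> h))) \<longlongrightarrow> f12 p) (at 0)"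
    by (rule isCont_tendsto_compose[OF _ Q_lim[OF A(1,2)]])
       (meson assms(6) continuous_on_eq_continuous_at open_UNIV UNIV_I)
  have "((\<lambda>h. f21 (Q (\<eta>' h) (\<xi>' h))) \<longlongrightarrow> f21 p) (at 0)"
    by (rule isCont_tendsto_compose[OF _ Q_lim[OF B(2,1)]])
       (meson assms(7) continuous_on_eq_continuous_at open_UNIV UNIV_I)
  then have "((\<lambda>h. f12 (Q (\<xi> h) (\<eta> h))) \<longlongrightarrow> f21 p) (at 0)"
    by (rule tendsto_cong[OF eq, THEN iffD2])
  with l12 show ?thesis using tendsto_unique by (metis trivial_limit_at)
qed

lemma partial_jet_commute:
  assumes "smoothJ F"
  shows "partial_jet d1 (partial_jet d2 F) = partial_jet d2 (partial_jet d1 F)"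
proof (cases "d1 = d2")
  case False
  have derivs: "((\<lambda>w. case_prod G (jet_coord_upd d w p)) has_real_derivative
      case_prod (partial_jet d G) (jet_coord_upd d v p)) (at v)" if "smoothJ G" for G d p v
    by (rule has_partial_coord_upd[OF smoothJ_has_partial[OF that]])
  have smooth: "smoothJ (partial_jet d1 F)" "smoothJ (partial_jet d2 F)"
    using assms smoothJ_partial_jet by auto
  have "case_prod (partial_jet d1 (partial_jet d2 F)) (J, t)
      = case_prod (partial_jet d2 (partial_jet d1 F)) (J, t)" for J t
    by (rule clairaut[OF False[symmetric] derivs[OF assms] derivs[OF assms] derivs[OF smooth(2)]
          derivs[OF smooth(1)]])
       (intro smoothJ_continuous smoothJ_partial_jet smooth)+
  then show ?thesis by (intro ext) simp
qed simp

section \<open>Total time derivatives\<close>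

lemma totJ_partial_jet:
  "totJ k F J t =
    partial_jet None F J t + (\<Sum>j\<le>k. \<Sum>i\<in>UNIV. partial_jet (Some (j, i)) F J t * J (Suc j) $ i)"
  by (simp add: totJ_def partial_jet_None partial_jet_Some inner_vec_def)

lemma totJ_eq:
  "totJ k F =
    (\<lambda>J t. partial_jet None F J t + (\<Sum>j\<le>k. \<Sum>i\<in>UNIV. partial_jet (Some (j, i)) F J t * J (Suc j) $ i))"
  by (intro ext) (rule totJ_partial_jet)

lemma smoothJ_totJ: "smoothJ F \<Longrightarrow> smoothJ (totJ k F)"
  unfolding totJ_eq
  by (intro smoothJ_add smoothJ_sum smoothJ_mult smoothJ_partial_jet smoothJ_jet_var
      finite_UNIV finite_atMost) auto

lemma depends_upto_totJ:
  fixes F :: "'n::finite jet_fun"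
  assumes "depends_upto N F" "N \<le> k"
  shows "depends_upto (Suc k) (totJ k F)"
  unfolding depends_upto_def
proof (intro allI impI)
  fix J J' :: "nat \<Rightarrow> real^'n" and t assume h: "\<forall>j\<le>Suc k. J j = J' j"
  have "depends_upto (Suc k) (partial_jet d F)" for d
    using depends_upto_partial_jet[OF depends_upto_mono[OF assms(1)]] assms(2) by simp
  then have "partial_jet d F J t = partial_jet d F J' t" for d
    using h unfolding depends_upto_def by blast
  moreover have "J (Suc j) = J' (Suc j)" if "j \<le> k" for j using h that by simp
  ultimately show "totJ k F J t = totJ k F J' t" unfolding totJ_partial_jet by simp
qed

lemma totJ_depends_upto:
  fixes F :: "'n::finite jet_fun"
  assumes "depends_upto p F" "p \<le> k"
  shows "totJ k F J t = totJ p F J t"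
proof -
  have "(\<Sum>j\<le>k. \<Sum>i\<in>UNIV. partial_jet (Some (j,i)) F J t * J (Suc j) $ i) =
        (\<Sum>j\<le>p. \<Sum>i\<in>UNIV. partial_jet (Some (j,i)) F J t * J (Suc j) $ i)"
  proof (rule sum.mono_neutral_right)
    show "\<forall>j\<in>{..k} - {..p}. (\<Sum>i\<in>UNIV. partial_jet (Some (j,i)) F J t * J (Suc j) $ i) = 0"
      using partial_jet_beyond_depends[OF assms(1)] by auto
  qed (use assms(2) in auto)
  then show ?thesis unfolding totJ_partial_jet by simp
qed

lemma totJ_const: "totJ k (\<lambda>J t. c) J t = 0"
  unfolding totJ_def dtJ_def gradJ_def by (simp add: inner_vec_def)

lemma sum_shift_indicator:
  fixes a :: "nat \<Rightarrow> 'n::finite \<Rightarrow> real"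
  shows "(\<Sum>j\<le>k. \<Sum>i\<in>UNIV. a j i * (if Some (p, l) = Some (Suc j, i) then 1 else 0)) =
    (if 0 < p \<and> p \<le> Suc k then a (p - 1) l else 0)"
proof -
  have "(\<Sum>i\<in>UNIV. a j i * (if Some (p, l) = Some (Suc j, i) then 1 else 0))
      = (if p = Suc j then a j l else 0)" for j
    by (simp add: if_distrib[of "\<lambda>x. _ * x"] sum.delta cong: if_cong)
  then show ?thesis
    by (cases p) (auto simp: sum.delta)
qed

lemma partial_jet_totJ:
  assumes F: "smoothJ F"
  shows "partial_jet (Some (p, l)) (totJ k F) = (\<lambda>J t. totJ k (partial_jet (Some (p, l)) F) J t
           + (if 0 < p \<and> p \<le> Suc k then partial_jet (Some (p - 1, l)) F J t else 0))"
proof (intro ext)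
  fix J t
  let ?d = "Some (p, l)"
  have "has_partial ?d (totJ k F) (\<lambda>J t. partial_jet ?d (partial_jet None F) J t +
      (\<Sum>j\<le>k. \<Sum>i\<in>UNIV. partial_jet ?d (partial_jet (Some (j, i)) F) J t * J (Suc j) $ i
          + partial_jet (Some (j, i)) F J t * (if ?d = Some (Suc j, i) then 1 else 0)))"
    unfolding totJ_eq
    by (intro has_partial_add has_partial_sum has_partial_mult smoothJ_has_partial
        smoothJ_partial_jet F has_partial_jet_var finite_UNIV finite_atMost) simp_all
  then have "partial_jet ?d (totJ k F) J t = partial_jet None (partial_jet ?d F) J t
      + (\<Sum>j\<le>k. \<Sum>i\<in>UNIV. partial_jet (Some (j, i)) (partial_jet ?d F) J t * J (Suc j) $ i)
      + (\<Sum>j\<le>k. \<Sum>i\<in>UNIV. partial_jet (Some (j, i)) F J t * (if ?d = Some (Suc j, i) then 1 else 0))"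
    by (simp add: has_partial_imp_eq sum.distrib partial_jet_commute[OF F])
  then show "partial_jet ?d (totJ k F) J t = totJ k (partial_jet ?d F) J t
      + (if 0 < p \<and> p \<le> Suc k then partial_jet (Some (p - 1, l)) F J t else 0)"
    unfolding totJ_partial_jet sum_shift_indicator by simp
qed

lemma totJ_jet_var: "totJ k (\<lambda>J t. J p $ m) J t = (if p \<le> k then J (Suc p) $ m else 0)"
proof -
  have pd: "partial_jet d (\<lambda>J t. J p $ m) = (\<lambda>J t. if d = Some (p, m) then 1 else 0)" for d
    by (rule has_partial_imp_eq[OF has_partial_jet_var])
  have i: "(\<Sum>i\<in>UNIV. (if Some (j, i) = Some (p, m) then 1 else 0) * J (Suc j) $ i) =
      (if j = p then J (Suc j) $ m else 0)" for j
  proof (cases "j = p")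
    case True
    have "(\<Sum>i\<in>UNIV. (if Some (j, i) = Some (p, m) then 1 else 0) * J (Suc j) $ i) =
       (\<Sum>i\<in>UNIV. if m = i then J (Suc j) $ i else 0)" using True by (intro sum.cong) auto
    also have "\<dots> = J (Suc j) $ m" by (subst sum.delta') auto
    finally show ?thesis using True by simp
  qed simp
  show ?thesis unfolding totJ_partial_jet pd i by (simp add: sum.delta)
qed

lemma totJ_linear_combination:
  fixes H :: "'n::finite jet_fun" and K :: "'a \<Rightarrow> 'n jet_fun"
  assumes "finite A"
    and "\<And>d. partial_jet d H J t = (\<Sum>a\<in>A. w a * partial_jet d (K a) J t) + (if d = None then w0 else 0)"
  shows "totJ k H J t = w0 + (\<Sum>a\<in>A. w a * totJ k (K a) J t)"
proof -
  have "(\<Sum>j\<le>k. \<Sum>i\<in>UNIV. (\<Sum>a\<in>A. w a * partial_jet (Some (j, i)) (K a) J t) * J (Suc j) $ i)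
      = (\<Sum>j\<le>k. \<Sum>a\<in>A. \<Sum>i\<in>UNIV. w a * (partial_jet (Some (j, i)) (K a) J t * J (Suc j) $ i))"
    by (simp add: sum_distrib_right mult.assoc sum.swap[of _ UNIV A])
  also have "\<dots> = (\<Sum>a\<in>A. w a * (\<Sum>j\<le>k. \<Sum>i\<in>UNIV. partial_jet (Some (j, i)) (K a) J t * J (Suc j) $ i))"
    by (simp add: sum_distrib_left sum.swap[of _ "{..k}" A])
  finally show ?thesis
    by (simp add: totJ_partial_jet assms(2) algebra_simps sum.distrib sum_distrib_left)
qed

lemma totJ_sum_mult:
  fixes Af Bf :: "'a \<Rightarrow> 'n::finite jet_fun"
  assumes fA: "finite A"
    and hA: "\<And>a d. has_partial d (Af a) (partial_jet d (Af a))"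
    and hB: "\<And>a d. has_partial d (Bf a) (partial_jet d (Bf a))"
  shows "totJ k (\<lambda>J t. \<Sum>a\<in>A. Af a J t * Bf a J t) J t =
     (\<Sum>a\<in>A. totJ k (Af a) J t * Bf a J t + Af a J t * totJ k (Bf a) J t)"
proof -
  define w where "w = (\<lambda>(a, b). if b then Bf a J t else Af a J t)"
  define K where "K = (\<lambda>(a, b). if b then Af a else Bf a)"
  have sum_bool: "(\<Sum>x\<in>A \<times> UNIV. f x) = (\<Sum>a\<in>A. f (a, True) + f (a, False))" for f :: "_ \<Rightarrow> real"
    by (simp add: sum.cartesian_product' UNIV_bool add.commute)
  have "partial_jet d (\<lambda>J t. \<Sum>a\<in>A. Af a J t * Bf a J t) J t
      = (\<Sum>x\<in>A \<times> UNIV. w x * partial_jet d (K x) J t) + (if d = None then 0 else 0)" for d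
    using has_partial_imp_eq[OF has_partial_sum[OF fA has_partial_mult[OF hA hB]]]
    by (simp add: sum_bool w_def K_def algebra_simps)
  from totJ_linear_combination[OF _ this] fA show ?thesis
    by (simp add: sum_bool w_def K_def algebra_simps)
qed

section \<open>Prolongation of a smooth point map\<close>

definition jet_comp :: "(real^'n::finite \<Rightarrow> real \<Rightarrow> real^'n) \<Rightarrow> nat \<Rightarrow> 'n \<Rightarrow> 'n jet_fun" where
  "jet_comp G k m = (\<lambda>J t. jetmap G k J t $ m)"

definition jac_comp :: "(real^'n::finite \<Rightarrow> real \<Rightarrow> real^'n) \<Rightarrow> 'n \<Rightarrow> 'n \<Rightarrow> 'n jet_fun" where
  "jac_comp G m i = (\<lambda>J t. jac G (J 0) t $ m $ i)"

lemma jet_comp_Suc: "jet_comp G (Suc k) m = totJ k (jet_comp G k m)"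
  by (intro ext) (simp add: jet_comp_def totJv_def)

locale smooth_point_map =
  fixes G :: "real^'n::finite \<Rightarrow> real \<Rightarrow> real^'n"
  assumes smooth_components: "\<And>m. smoothE (\<lambda>p::(real^'n) \<times> real. G (fst p) (snd p) $ m)"
begin

lemma smoothJ_depends_upto_jet_comp: "smoothJ (jet_comp G k m) \<and> depends_upto k (jet_comp G k m)"
proof (induction k arbitrary: m)
  case 0
  have "smoothJ (jet_comp G 0 m)"
    unfolding jet_comp_def using smoothJ_smoothE[OF smooth_components[of m]] by simp
  moreover have "depends_upto 0 (jet_comp G 0 m)" by (simp add: depends_upto_def jet_comp_def)
  ultimately show ?case by blast
next
  case (Suc k)
  then show ?case unfolding jet_comp_Suc using smoothJ_totJ depends_upto_totJ by blast
qed

lemma smoothJ_jet_comp: "smoothJ (jet_comp G k m)"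
  using smoothJ_depends_upto_jet_comp by blast

lemma depends_upto_jet_comp: "depends_upto k (jet_comp G k m)"
  using smoothJ_depends_upto_jet_comp by blast

lemma partial_jet_jet_comp_0: "partial_jet (Some (0, i)) (jet_comp G 0 m) = jac_comp G m i"
  by (intro ext) (simp add: partial_jet_def jet_comp_def jac_comp_def jac_def)

lemma smoothJ_jac_comp: "smoothJ (jac_comp G m i)"
  using smoothJ_partial_jet[OF smoothJ_jet_comp[of 0 m]] partial_jet_jet_comp_0 by metis

lemma depends_upto_jac_comp: "depends_upto 0 (jac_comp G m i)"
  using depends_upto_partial_jet[OF depends_upto_jet_comp[of 0 m]] partial_jet_jet_comp_0 by metis

lemma partial_jet_jet_comp_top: "partial_jet (Some (k, i)) (jet_comp G k m) = jac_comp G m i"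
proof (induction k)
  case 0
  then show ?case by (rule partial_jet_jet_comp_0)
next
  case (Suc k)
  have "partial_jet (Some (Suc k, i)) (jet_comp G k m) = (\<lambda>J t. 0)"
    by (rule partial_jet_beyond_depends[OF depends_upto_jet_comp]) simp
  then show ?case
    unfolding jet_comp_Suc partial_jet_totJ[OF smoothJ_jet_comp] using Suc by (simp add: totJ_const)
qed

lemma partial_jet_jet_comp_Suc:
  "partial_jet (Some (k, i)) (jet_comp G (Suc k) m) = (\<lambda>J t. real (Suc k) * totJ 0 (jac_comp G m i) J t)"
proof (induction k)
  case 0
  show ?case
    unfolding jet_comp_Suc partial_jet_totJ[OF smoothJ_jet_comp] partial_jet_jet_comp_0 by simp
next
  case (Suc k)
  have "totJ (Suc k) (jac_comp G m i) J t = totJ 0 (jac_comp G m i) J t" for J t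
    by (rule totJ_depends_upto[OF depends_upto_jac_comp]) simp
  then show ?case
    unfolding jet_comp_Suc[of G "Suc k"] partial_jet_totJ[OF smoothJ_jet_comp] partial_jet_jet_comp_top
    by (intro ext) (simp add: algebra_simps Suc.IH)
qed

abbreviation jet_image :: "(nat \<Rightarrow> real^'n) \<Rightarrow> real \<Rightarrow> nat \<Rightarrow> real^'n" where
  "jet_image J t \<equiv> (\<lambda>k. jetmap G k J t)"

lemma has_partial_comp_jet_image:
  fixes F :: "'n jet_fun"
  assumes F: "smoothJ F" "depends_upto N F"
  shows "has_partial d (\<lambda>J t. F (jet_image J t) t)
     (\<lambda>J t. (\<Sum>p\<le>N. \<Sum>m\<in>UNIV.
                partial_jet (Some (p, m)) F (jet_image J t) t * partial_jet d (jet_comp G p m) J t)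
            + partial_jet None F (jet_image J t) t * (if d = None then 1 else 0))"
  unfolding has_partial_def
proof (intro allI)
  fix J t
  define X where "X s = jet_image (fst (shift_coord d s J t)) (snd (shift_coord d s J t))" for s
  define T where "T s = snd (shift_coord d s J t)" for s
  have "((\<lambda>s. X s j $ m) has_real_derivative partial_jet d (jet_comp G j m) J t) (at 0)" for j m
    using smoothJ_has_partial[OF smoothJ_jet_comp, of d j m]
    by (simp add: has_partial_def X_def case_prod_unfold jet_comp_def)
  moreover have "(T has_real_derivative (if d = None then 1 else 0)) (at 0)"
    unfolding T_def by (cases d) (auto intro!: derivative_eq_intros)
  ultimately have "((\<lambda>s. F (X s) (T s)) has_real_derivative
      (\<Sum>p\<le>N. \<Sum>m\<in>UNIV. partial_jet (Some (p, m)) F (X 0) (T 0) * partial_jet d (jet_comp G p m) J t)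
        + partial_jet None F (X 0) (T 0) * (if d = None then 1 else 0)) (at 0)"
    by (rule DERIV_jet_chain[OF F])
  then show "((\<lambda>s. case_prod (\<lambda>J t. F (jet_image J t) t) (shift_coord d s J t)) has_real_derivative
      (\<Sum>p\<le>N. \<Sum>m\<in>UNIV.
         partial_jet (Some (p, m)) F (jet_image J t) t * partial_jet d (jet_comp G p m) J t)
        + partial_jet None F (jet_image J t) t * (if d = None then 1 else 0)) (at 0)"
    by (simp add: X_def T_def case_prod_unfold)
qed

lemma totJ_comp_jet_image:
  fixes F :: "'n jet_fun"
  assumes F: "smoothJ F" "depends_upto k F"
  shows "totJ k (\<lambda>J t. F (jet_image J t) t) J t = totJ k F (jet_image J t) t"
proof -
  define P where "P = {..k} \<times> (UNIV :: 'n set)"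
  define w where "w = (\<lambda>(p, m). partial_jet (Some (p, m)) F (jet_image J t) t)"
  have "partial_jet d (\<lambda>J t. F (jet_image J t) t) J t
      = (\<Sum>x\<in>P. w x * partial_jet d (case_prod (jet_comp G) x) J t)
        + (if d = None then partial_jet None F (jet_image J t) t else 0)" for d
    using has_partial_imp_eq[OF has_partial_comp_jet_image[OF F, of d]]
    by (simp add: P_def w_def sum.cartesian_product')
  then have "totJ k (\<lambda>J t. F (jet_image J t) t) J t
      = partial_jet None F (jet_image J t) t + (\<Sum>x\<in>P. w x * totJ k (case_prod (jet_comp G) x) J t)"
    by (rule totJ_linear_combination[rotated]) (simp add: P_def)
  also have "\<dots> = totJ k F (jet_image J t) t"
  proof -
    have "totJ k (jet_comp G p m) J t = jet_image J t (Suc p) $ m" if "p \<le> k" for p m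
    proof -
      have "totJ k (jet_comp G p m) J t = totJ p (jet_comp G p m) J t"
        by (rule totJ_depends_upto[OF depends_upto_jet_comp that])
      also have "\<dots> = jet_comp G (Suc p) m J t" by (simp add: jet_comp_Suc)
      finally show ?thesis by (simp add: jet_comp_def)
    qed
    then show ?thesis
      by (simp add: totJ_partial_jet P_def w_def sum.cartesian_product')
  qed
  finally show ?thesis .
qed

lemma partial_jet_transport:
  assumes "smoothJ Y" "depends_upto N Y"
  shows "partial_jet d (transport G Y) Jb t =
     (\<Sum>p\<le>N. \<Sum>m\<in>UNIV.
        partial_jet (Some (p, m)) Y (jet_image Jb t) t * partial_jet d (jet_comp G p m) Jb t)
      + partial_jet None Y (jet_image Jb t) t * (if d = None then 1 else 0)"
  unfolding transport_def by (simp add: has_partial_imp_eq[OF has_partial_comp_jet_image[OF assms]])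

lemma partial_jet_transport_top:
  assumes "smoothJ Y" "depends_upto (Suc r) Y"
  shows "partial_jet (Some (Suc r, i)) (transport G Y) Jb t =
    (\<Sum>m\<in>UNIV. partial_jet (Some (Suc r, m)) Y (jet_image Jb t) t * jac_comp G m i Jb t)"
proof -
  have "partial_jet (Some (Suc r, i)) (jet_comp G p m) = (\<lambda>J t. 0)" if "p \<le> r" for p m
    by (rule partial_jet_beyond_depends[OF depends_upto_jet_comp]) (use that in simp)
  then show ?thesis
    by (simp add: partial_jet_transport[OF assms] partial_jet_jet_comp_top)
qed

lemma partial_jet_transport_below_top:
  assumes "smoothJ Y" "depends_upto (Suc r) Y"
  shows "partial_jet (Some (r, i)) (transport G Y) Jb t =
    (\<Sum>m\<in>UNIV. partial_jet (Some (r, m)) Y (jet_image Jb t) t * jac_comp G m i Jb t)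
    + real (Suc r) *
      (\<Sum>m\<in>UNIV. partial_jet (Some (Suc r, m)) Y (jet_image Jb t) t * totJ 0 (jac_comp G m i) Jb t)"
proof -
  have "partial_jet (Some (r, i)) (jet_comp G p m) = (\<lambda>J t. 0)" if "p < r" for p m
    by (rule partial_jet_beyond_depends[OF depends_upto_jet_comp]) (use that in simp)
  moreover have "(\<Sum>p\<le>Suc r. f p) = (\<Sum>p<r. f p) + f r + f (Suc r)" for f :: "nat \<Rightarrow> real"
    by (simp add: lessThan_Suc_atMost[symmetric])
  ultimately show ?thesis
    by (simp add: partial_jet_transport[OF assms] partial_jet_jet_comp_top partial_jet_jet_comp_Suc
        sum_distrib_left mult.assoc mult.left_commute)
qed

lemma totJ_partial_jet_transport_top:
  assumes Y: "smoothJ Y" "depends_upto (Suc r) Y"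
  defines "g m \<equiv> partial_jet (Some (Suc r, m)) Y"
  shows "totJ (Suc r) (\<lambda>J t. gradJ (Suc r) (transport G Y) J t $ i) Jb t =
     (\<Sum>m\<in>UNIV. totJ (Suc r) (g m) (jet_image Jb t) t * jac_comp G m i Jb t
        + g m (jet_image Jb t) t * totJ 0 (jac_comp G m i) Jb t)"
proof -
  have g: "smoothJ (g m)" "depends_upto (Suc r) (g m)" for m
    unfolding g_def using Y by (auto intro: smoothJ_partial_jet depends_upto_partial_jet)
  define A where "A m = (\<lambda>J t. g m (jet_image J t) t)" for m
  have "(\<lambda>J t. gradJ (Suc r) (transport G Y) J t $ i)
      = (\<lambda>J t. \<Sum>m\<in>UNIV. A m J t * jac_comp G m i J t)"
    by (intro ext) (simp add: partial_jet_Some[symmetric] partial_jet_transport_top[OF Y] A_def g_def)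
  moreover have "has_partial d (A m) (partial_jet d (A m))" for m d
    unfolding A_def by (rule has_partial_partial_jet[OF has_partial_comp_jet_image[OF g]])
  moreover have "has_partial d (jac_comp G m i) (partial_jet d (jac_comp G m i))" for m d
    by (rule smoothJ_has_partial[OF smoothJ_jac_comp])
  moreover have "totJ (Suc r) (A m) Jb t = totJ (Suc r) (g m) (jet_image Jb t) t" for m
    unfolding A_def by (rule totJ_comp_jet_image[OF g])
  moreover have "totJ (Suc r) (jac_comp G m i) Jb t = totJ 0 (jac_comp G m i) Jb t" for m
    by (rule totJ_depends_upto[OF depends_upto_jac_comp]) simp
  ultimately show ?thesis
    by (simp add: totJ_sum_mult A_def)
qed

lemma Op_transport:
  assumes Y: "smoothJ Y" "depends_upto (Suc r) Y"
  shows "Op r (transport G Y) Jb t = transpose (jac G (Jb 0) t) *v Op r Y (jet_image Jb t) t"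
proof -
  define g where "g m = partial_jet (Some (Suc r, m)) Y" for m
  have "Op r (transport G Y) Jb t $ i = (transpose (jac G (Jb 0) t) *v Op r Y (jet_image Jb t) t) $ i"
    for i
  proof -
    have "Op r (transport G Y) Jb t $ i = partial_jet (Some (r, i)) (transport G Y) Jb t
        - real (Suc r) * totJ (Suc r) (\<lambda>J t. gradJ (Suc r) (transport G Y) J t $ i) Jb t"
      by (simp add: Op_def totJv_def partial_jet_Some)
    also have "\<dots> = (\<Sum>m\<in>UNIV. jac_comp G m i Jb t *
        (partial_jet (Some (r, m)) Y (jet_image Jb t) t
          - real (Suc r) * totJ (Suc r) (g m) (jet_image Jb t) t))"
      unfolding partial_jet_transport_below_top[OF Y] totJ_partial_jet_transport_top[OF Y] g_def
      by (simp add: sum.distrib sum_subtractf sum_distrib_left algebra_simps)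
    also have "\<dots> = (transpose (jac G (Jb 0) t) *v Op r Y (jet_image Jb t) t) $ i"
    proof -
      have "(\<lambda>J t. gradJ (Suc r) Y J t $ m) = g m" for m
        by (intro ext) (simp add: partial_jet_Some g_def)
      then show ?thesis
        by (simp add: matrix_vector_mult_def transpose_def Op_def totJv_def jac_comp_def partial_jet_Some)
    qed
    finally show ?thesis .
  qed
  then show ?thesis by (simp add: vec_eq_iff)
qed

end

lemma jetmap_jetmap_inverse:
  assumes \<Phi>: "smooth_point_map \<Phi>" and \<Psi>: "smooth_point_map \<Psi>"
    and inv: "\<And>q t. \<Psi> (\<Phi> q t) t = q"
  shows "jetmap \<Psi> k (\<lambda>k. jetmap \<Phi> k J t) t = J k"
proof (induction k arbitrary: J t)
  case 0
  then show ?case by (simp add: inv)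
next
  case (Suc k)
  interpret \<Phi>: smooth_point_map \<Phi> by (rule \<Phi>)
  interpret \<Psi>: smooth_point_map \<Psi> by (rule \<Psi>)
  have IH: "(\<lambda>J t. jet_comp \<Psi> k m (\<Phi>.jet_image J t) t) = (\<lambda>J t. J k $ m)" for m
    using Suc by (simp add: jet_comp_def)
  have "jetmap \<Psi> (Suc k) (\<Phi>.jet_image J t) t $ m = J (Suc k) $ m" for m
  proof -
    have "jetmap \<Psi> (Suc k) (\<Phi>.jet_image J t) t $ m = totJ k (jet_comp \<Psi> k m) (\<Phi>.jet_image J t) t"
      by (simp add: jet_comp_def totJv_def)
    also have "\<dots> = totJ k (\<lambda>J t. jet_comp \<Psi> k m (\<Phi>.jet_image J t) t) J t"
      by (rule \<Phi>.totJ_comp_jet_image[OF \<Psi>.smoothJ_jet_comp \<Psi>.depends_upto_jet_comp, symmetric])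
    also have "\<dots> = J (Suc k) $ m" unfolding IH totJ_jet_var by simp
    finally show ?thesis .
  qed
  then show ?case by (simp add: vec_eq_iff)
qed

lemma jac_inverse:
  assumes \<Phi>: "smooth_point_map \<Phi>" and \<Psi>: "smooth_point_map \<Psi>"
    and inv: "\<And>q t. \<Psi> (\<Phi> q t) t = q"
  shows "jac \<Psi> (\<Phi> q t) t ** jac \<Phi> q t = mat 1"
proof -
  interpret \<Phi>: smooth_point_map \<Phi> by (rule \<Phi>)
  interpret \<Psi>: smooth_point_map \<Psi> by (rule \<Psi>)
  have "(jac \<Psi> (\<Phi> q t) t ** jac \<Phi> q t) $ m $ j = mat 1 $ m $ j" for m j
  proof -
    define X where "X s = (\<lambda>_::nat. \<Phi> (q + s *\<^sub>R axis j 1) t)" for s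
    have dX: "((\<lambda>s. X s l $ n) has_real_derivative jac \<Phi> q t $ n $ j) (at 0)" if "l \<le> 0" for l n
      using smoothJ_has_partial[OF \<Phi>.smoothJ_jet_comp, of "Some (0, j)" 0 n]
      unfolding \<Phi>.partial_jet_jet_comp_0 has_partial_def
      by (simp add: X_def jet_comp_def jac_comp_def) (erule allE[of _ "\<lambda>_. q"], simp)
    from DERIV_jet_chain[OF \<Psi>.smoothJ_jet_comp[of 0 m] \<Psi>.depends_upto_jet_comp[of 0 m] dX
        DERIV_const[of t]]
    have "((\<lambda>s. jet_comp \<Psi> 0 m (X s) t) has_real_derivative
        (\<Sum>n\<in>UNIV. jac_comp \<Psi> m n (X 0) t * jac \<Phi> q t $ n $ j)) (at 0)"
      by (simp add: \<Psi>.partial_jet_jet_comp_0)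
    then have "((\<lambda>s. (q + s *\<^sub>R axis j 1) $ m) has_real_derivative
        (\<Sum>n\<in>UNIV. jac \<Psi> (\<Phi> q t) t $ m $ n * jac \<Phi> q t $ n $ j)) (at 0)"
      by (simp add: jet_comp_def jac_comp_def X_def inv)
    moreover have "((\<lambda>s. (q + s *\<^sub>R axis j 1) $ m) has_real_derivative (if m = j then 1 else 0))
        (at 0)"
      by (auto simp: axis_def intro!: derivative_eq_intros)
    ultimately show ?thesis
      by (simp add: matrix_matrix_mult_def mat_def DERIV_unique)
  qed
  then show ?thesis by (simp add: vec_eq_iff)
qed

theorem proposition1p1:
  fixes r :: nat
    and Y :: "(nat \<Rightarrow> real^'n) \<Rightarrow> real \<Rightarrow> real"
    and \<Phi> \<Psi> :: "real^'n \<Rightarrow> real \<Rightarrow> real^'n"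
  assumes Y_smooth: "smoothJ Y"
    and Y_dep: "depends_upto (Suc r) Y"
    and \<Phi>_smooth: "\<And>i. smoothE (\<lambda>p::(real^'n) \<times> real. \<Phi> (fst p) (snd p) $ i)"
    and \<Psi>_smooth: "\<And>i. smoothE (\<lambda>p::(real^'n) \<times> real. \<Psi> (fst p) (snd p) $ i)"
    and inv1: "\<And>q t. \<Psi> (\<Phi> q t) t = q"
    and inv2: "\<And>qb t. \<Phi> (\<Psi> qb t) t = qb"
    and jac_nz: "\<And>q t. det (jac \<Phi> q t) \<noteq> 0"
  shows "\<forall>J t. Op r Y J t =
           transpose (jac \<Phi> (J 0) t) *v Op r (transport \<Psi> Y) (\<lambda>k. jetmap \<Phi> k J t) t"
proof (intro allI)
  fix J :: "nat \<Rightarrow> real^'n" and t :: real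
  have \<Phi>: "smooth_point_map \<Phi>" and \<Psi>: "smooth_point_map \<Psi>"
    using \<Phi>_smooth \<Psi>_smooth by (auto intro: smooth_point_map.intro)
  have "transpose (jac \<Phi> (J 0) t) *v Op r (transport \<Psi> Y) (\<lambda>k. jetmap \<Phi> k J t) t
      = transpose (jac \<Phi> (J 0) t) *v (transpose (jac \<Psi> (\<Phi> (J 0) t) t) *v Op r Y J t)"
    using smooth_point_map.Op_transport[OF \<Psi> Y_smooth Y_dep]
    by (simp add: jetmap_jetmap_inverse[OF \<Phi> \<Psi> inv1])
  also have "\<dots> = transpose (jac \<Psi> (\<Phi> (J 0) t) t ** jac \<Phi> (J 0) t) *v Op r Y J t"
    unfolding matrix_vector_mul_assoc matrix_transpose_mul ..
  also have "\<dots> = Op r Y J t"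
    by (simp add: jac_inverse[OF \<Phi> \<Psi> inv1] transpose_mat)
  finally show "Op r Y J t = transpose (jac \<Phi> (J 0) t) *v Op r (transport \<Psi> Y) (\<lambda>k. jetmap \<Phi> k J t) t"
    by simp
qed

end
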